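(* Let $T$ be a local, translation-invariant stochastic matrix on $\mathbb{Z}\times\{1,\dots,D\}$ with $\det X(k)\ne0$ for all $k\in[-\pi,\pi]$. Suppose there are positive numbers $\pi_1,\dots,\pi_D>0$ such that, setting $\pi_{i,a}=\pi_a$ for all $i$, the vector $\boldsymbol\pi=(\pi_{i,a})$ is a steady state, $T\boldsymbol\pi=\boldsymbol\pi$, and $T$ satisfies the detailed balance condition $$T_{i,a;j,b}\,\pi_{j,b}=T_{j,b;i,a}\,\pi_{i,a}\quad\text{for all } i,j,a,b .$$ Then $w(T,0)=0$.
   Context: States are pairs $(j,a)$, $j\in\mathbb{Z}$, $a\in\{1,\dots,D\}$. A stochastic matrix is a real matrix $T=(T_{i,a;j,b})$ with $T_{i,a;j,b}\ge0$ and $\sum_{i,a}T_{i,a;j,b}=1$ for all $(j,b)$. It is local if there are $C,\ell>0$ with $T_{i,a;j,b}\le Ce^{-|i-j|/\ell}$ for all sufficiently large $|i-j|$, and translation invariant if $T_{i+1,a;j+1,b}=T_{i,a;j,b}$. The Bloch matrix is $X(k)$ with $X_{a,b}(k)=\sum_{l\in\mathbb{Z}}T_{j+l,a;j,b}e^{-ikl}$, $k\in[-\pi,\pi]$, and $w(T,0)=\int_{-\pi}^{\pi}\frac{dk}{2\pi i}\partial_k\log\det X(k)\in\mathbb{Z}$. *)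

theory Defs
  imports "HOL-Analysis.Analysis"
begin

text \<open>A matrix on the state space Z x {1..D} is a function
  T i a j b = T_{i,a;j,b}; only values with a, b in {1..D} matter.\<close>

type_synonym smat = "int \<Rightarrow> nat \<Rightarrow> int \<Rightarrow> nat \<Rightarrow> real"

definition stochastic :: "nat \<Rightarrow> smat \<Rightarrow> bool" where
  "stochastic D T \<longleftrightarrow>
     (\<forall>i j a b. a \<in> {1..D} \<and> b \<in> {1..D} \<longrightarrow> T i a j b \<ge> 0) \<and>
     (\<forall>j b. b \<in> {1..D} \<longrightarrow>
        ((\<lambda>(i, a). T i a j b) has_sum 1) (UNIV \<times> {1..D}))"

definition local_mat :: "nat \<Rightarrow> smat \<Rightarrow> bool" where
  "local_mat D T \<longleftrightarrow>
     (\<exists>C L. C > 0 \<and> L > 0 \<and> (\<exists>N. \<forall>i j a b. a \<in> {1..D} \<and> b \<in> {1..D} \<and> \<bar>i - j\<bar> \<ge> N \<longrightarrow>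
        T i a j b \<le> C * exp (- real_of_int \<bar>i - j\<bar> / L)))"

definition transl_inv :: "nat \<Rightarrow> smat \<Rightarrow> bool" where
  "transl_inv D T \<longleftrightarrow>
     (\<forall>i j a b. a \<in> {1..D} \<and> b \<in> {1..D} \<longrightarrow> T (i + 1) a (j + 1) b = T i a j b)"

text \<open>Bloch matrix X(k)_{a,b} = sum_l T_{j+l,a;j,b} e^{-ikl} (evaluated at j = 0,
  which is independent of j by translation invariance).\<close>
definition bloch :: "smat \<Rightarrow> real \<Rightarrow> nat \<Rightarrow> nat \<Rightarrow> complex" where
  "bloch T k a b = (\<Sum>\<^sub>\<infinity>l\<in>(UNIV::int set).
      complex_of_real (T l a 0 b) * exp (- \<i> * complex_of_real (k * real_of_int l)))"

definition detD :: "nat \<Rightarrow> (nat \<Rightarrow> nat \<Rightarrow> complex) \<Rightarrow> complex" where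
  "detD D M = (\<Sum>p | p permutes {1..D}. of_int (sign p) * (\<Prod>a\<in>{1..D}. M (p a) a))"

definition bloch_det :: "nat \<Rightarrow> smat \<Rightarrow> real \<Rightarrow> complex" where
  "bloch_det D T k = detD D (bloch T k)"

text \<open>w(T,0) = int_{-pi}^{pi} dk/(2 pi i) d_k log det X(k)
   = (1/(2 pi i)) int_{-pi}^{pi} (det X)'(k) / det X(k) dk.\<close>
definition winding_w :: "nat \<Rightarrow> smat \<Rightarrow> complex" where
  "winding_w D T = integral {-pi..pi}
      (\<lambda>k. vector_derivative (bloch_det D T) (at k) / bloch_det D T k) / (2 * pi * \<i>)"

end

theory Submission
  imports Defs
begin

(* Detailed balance with respect to the positive weights p, together with translation
   invariance, gives p_b X(k)_{ab} = p_a X(-k)_{ba}: X(k) is diagonally similar to the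
   transpose of X(-k), so det X(k) is an even function of k. Locality makes the entries of
   X(k) Fourier series with exponentially decaying coefficients, so det X is differentiable.
   Its logarithmic derivative is then odd, and its integral over [-pi, pi] vanishes. *)

lemma detD_cong:
  assumes "\<And>a b. a \<in> {1..D} \<Longrightarrow> b \<in> {1..D} \<Longrightarrow> M a b = N a b"
  shows "detD D M = detD D N"
proof -
  have "(\<Prod>a\<in>{1..D}. M (s a) a) = (\<Prod>a\<in>{1..D}. N (s a) a)" if "s permutes {1..D}" for s
    using assms permutes_in_image[OF that] by (intro prod.cong) auto
  then show ?thesis
    unfolding detD_def by (intro sum.cong) auto
qed

lemma detD_transpose: "detD D (\<lambda>a b. M b a) = detD D M"
proof -
  have "detD D (\<lambda>a b. M b a)
      = (\<Sum>s | s permutes {1..D}. of_int (sign (inv s)) * (\<Prod>b\<in>{1..D}. M (inv s b) b))"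
    unfolding detD_def
  proof (rule sum.cong[OF refl])
    fix s assume "s \<in> {s. s permutes {1..D}}"
    then have s: "s permutes {1..D}" by simp
    have "sign (inv s) = sign s"
      by (rule sign_inverse) (use s permutation_permutes in blast)
    then show "of_int (sign s) * (\<Prod>a\<in>{1..D}. M a (s a))
        = of_int (sign (inv s)) * (\<Prod>b\<in>{1..D}. M (inv s b) b)"
      using prod.permutes_inv[OF s, of "\<lambda>b a. M a b"] by simp
  qed
  also have "\<dots> = detD D M"
    unfolding detD_def by (rule sum_permutations_inverse[symmetric])
  finally show ?thesis .
qed

lemma detD_diagonal_similarity:
  assumes "\<forall>a\<in>{1..D}. q a \<noteq> 0"
  shows "detD D (\<lambda>a b. q a * M a b / q b) = detD D M"
  unfolding detD_def
proof (rule sum.cong[OF refl])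
  fix s assume "s \<in> {s. s permutes {1..D}}"
  then have s: "s permutes {1..D}" by simp
  have "(\<Prod>a\<in>{1..D}. q (s a) * M (s a) a / q a)
      = (\<Prod>a\<in>{1..D}. q (s a)) / (\<Prod>a\<in>{1..D}. q a) * (\<Prod>a\<in>{1..D}. M (s a) a)"
    by (simp add: prod.distrib prod_dividef)
  also have "(\<Prod>a\<in>{1..D}. q (s a)) = (\<Prod>a\<in>{1..D}. q a)"
    using prod.permute[OF s, of q] by (simp add: o_def)
  also have "(\<Prod>a\<in>{1..D}. q a) / (\<Prod>a\<in>{1..D}. q a) = 1"
    using assms by simp
  finally show "of_int (sign s) * (\<Prod>a\<in>{1..D}. q (s a) * M (s a) a / q a)
      = of_int (sign s) * (\<Prod>a\<in>{1..D}. M (s a) a)"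
    by simp
qed

lemma differentiable_prod:
  fixes f :: "'i \<Rightarrow> 'a::real_normed_vector \<Rightarrow> 'b::real_normed_field"
  assumes "\<And>i. i \<in> I \<Longrightarrow> f i differentiable (at x within S)"
  shows "(\<lambda>x. \<Prod>i\<in>I. f i x) differentiable (at x within S)"
proof -
  obtain f' where "\<And>i. i \<in> I \<Longrightarrow> (f i has_derivative f' i) (at x within S)"
    using assms unfolding differentiable_def by metis
  then show ?thesis
    unfolding differentiable_def by (blast intro: has_derivative_prod)
qed

lemma detD_differentiable:
  fixes M :: "'a::real_normed_vector \<Rightarrow> nat \<Rightarrow> nat \<Rightarrow> complex"
  assumes "\<And>a b. a \<in> {1..D} \<Longrightarrow> b \<in> {1..D} \<Longrightarrow> (\<lambda>x. M x a b) differentiable (at x)"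
  shows "(\<lambda>x. detD D (M x)) differentiable (at x)"
proof -
  have "(\<lambda>x. of_int (sign s) * (\<Prod>a\<in>{1..D}. M x (s a) a)) differentiable (at x)"
    if "s permutes {1..D}" for s
    using permutes_in_image[OF that] by (intro differentiable_mult differentiable_const differentiable_prod assms) auto
  then show ?thesis
    unfolding detD_def by (intro differentiable_sum) (auto simp: finite_permutations)
qed

lemma vector_derivative_even_function:
  fixes f :: "real \<Rightarrow> 'a::real_normed_vector"
  assumes "f differentiable (at x)" and even: "\<And>x. f (- x) = f x"
  shows "vector_derivative f (at (- x)) = - vector_derivative f (at x)"
proof -
  have "(f has_vector_derivative vector_derivative f (at x)) (at (- (- x)))"
    using assms(1) by (simp add: vector_derivative_works)
  then have "((f \<circ> uminus) has_vector_derivative (-1::real) *\<^sub>R vector_derivative f (at x)) (at (- x))"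
    by (intro vector_diff_chain_at) (auto intro!: derivative_eq_intros)
  moreover have "f \<circ> uminus = f"
    using even by (auto simp: o_def)
  ultimately show ?thesis
    by (auto intro: vector_derivative_at)
qed

lemma integral_odd_function:
  fixes h :: "real \<Rightarrow> 'a::real_normed_vector"
  assumes "\<And>x. h (- x) = - h x"
  shows "integral {-a..a} h = 0"
proof -
  have "integral {-a..a} h = integral {-a..a} (\<lambda>x. h (- x))"
    using Henstock_Kurzweil_Integration.integral_reflect_real[of a "-a" h] by simp
  also have "\<dots> = - integral {-a..a} h"
    using assms by simp
  finally show ?thesis
    by (simp add: eq_neg_iff_add_eq_0 flip: scaleR_2)
qed

lemma summable_exp_decay_weighted:
  fixes a :: "nat \<Rightarrow> 'a::real_normed_vector"
  assumes "L > 0" and decay: "\<And>n. n \<ge> N \<Longrightarrow> norm (a n) \<le> C * exp (- real n / L)"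
  shows "summable (\<lambda>n. norm (a n) * exp (1 / (2 * L)) ^ n)"
proof (rule summable_comparison_test_ev)
  show "summable (\<lambda>n. C * exp (- 1 / (2 * L)) ^ n)"
    using assms(1) by (intro summable_mult summable_geometric) simp
  show "\<forall>\<^sub>F n in sequentially. norm (norm (a n) * exp (1 / (2 * L)) ^ n) \<le> C * exp (- 1 / (2 * L)) ^ n"
    unfolding eventually_sequentially
  proof (intro exI allI impI)
    fix n assume "N \<le> n"
    then have "norm (a n) * exp (1 / (2 * L)) ^ n \<le> C * exp (- real n / L) * exp (1 / (2 * L)) ^ n"
      using decay by (intro mult_right_mono) auto
    also have "\<dots> = C * exp (- 1 / (2 * L)) ^ n"
      using assms(1) by (simp add: field_simps flip: exp_add exp_of_nat_mult)
    finally show "norm (norm (a n) * exp (1 / (2 * L)) ^ n) \<le> C * exp (- 1 / (2 * L)) ^ n"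
      by simp
  qed
qed

lemma has_sum_int_split:
  fixes f :: "int \<Rightarrow> 'a::banach"
  assumes "summable (\<lambda>n. norm (f (int n)))" "summable (\<lambda>n. norm (f (- int n - 1)))"
  shows "(f has_sum (\<Sum>n. f (int n)) + (\<Sum>n. f (- int n - 1))) UNIV"
proof -
  have nonneg: "(f has_sum (\<Sum>n. f (int n))) (range int)"
    using norm_summable_imp_has_sum[OF assms(1) summable_sums[OF summable_norm_cancel[OF assms(1)]]]
    by (subst has_sum_reindex) (auto simp: o_def)
  have neg: "(f has_sum (\<Sum>n. f (- int n - 1))) (range (\<lambda>n. - int n - 1))"
    using norm_summable_imp_has_sum[OF assms(2) summable_sums[OF summable_norm_cancel[OF assms(2)]]]
    by (subst has_sum_reindex) (auto simp: o_def inj_on_def)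
  have "range int \<inter> range (\<lambda>n. - int n - 1) = {}"
    by auto
  moreover have "range int \<union> range (\<lambda>n. - int n - 1) = (UNIV :: int set)"
  proof -
    have "l \<in> range int \<or> l \<in> range (\<lambda>n. - int n - 1)" for l :: int
      by (cases "l \<ge> 0") (auto simp: image_iff intro: exI[of _ "nat l"] exI[of _ "nat (- l - 1)"])
    then show ?thesis by blast
  qed
  ultimately show ?thesis
    using has_sum_Un_disjoint[OF nonneg neg] by simp
qed

lemma fourier_series_split:
  fixes c :: "int \<Rightarrow> complex"
  assumes "summable (\<lambda>n. norm (c (int n)))" "summable (\<lambda>n. norm (c (- int n - 1)))"
  shows "(\<Sum>\<^sub>\<infinity>l. c l * exp (- \<i> * of_real (k * of_int l)))
    = (\<Sum>n. c (int n) * exp (- \<i> * of_real k) ^ n)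
      + exp (\<i> * of_real k) * (\<Sum>n. c (- int n - 1) * exp (\<i> * of_real k) ^ n)"
proof -
  define f where "f l = c l * exp (- \<i> * of_real (k * of_int l))" for l
  have nonneg: "f (int n) = c (int n) * exp (- \<i> * of_real k) ^ n" for n
    by (simp add: f_def algebra_simps flip: exp_of_nat_mult)
  have neg: "f (- int n - 1) = exp (\<i> * of_real k) * (c (- int n - 1) * exp (\<i> * of_real k) ^ n)" for n
    by (simp add: f_def algebra_simps flip: exp_of_nat_mult exp_add)
  have "norm (f l) = norm (c l)" for l
    by (simp add: f_def norm_mult)
  then have "(f has_sum (\<Sum>n. f (int n)) + (\<Sum>n. f (- int n - 1))) UNIV"
    using assms by (intro has_sum_int_split) simp_all
  moreover have "summable (\<lambda>n. c (- int n - 1) * exp (\<i> * of_real k) ^ n)"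
    using assms(2) by (rule summable_norm_cancel[OF summable_comparison_test']) (simp add: norm_mult norm_power)
  ultimately show ?thesis
    unfolding f_def[symmetric] nonneg neg by (simp add: infsumI suminf_mult)
qed

lemma powser_differentiable:
  fixes a :: "nat \<Rightarrow> complex"
  assumes "summable (\<lambda>n. norm (a n) * K ^ n)" and "norm z < K"
  shows "(\<lambda>z. \<Sum>n. a n * z ^ n) differentiable (at z)"
proof -
  have "K > 0"
    using assms(2) norm_ge_zero by (rule le_less_trans[rotated])
  then have "norm (a n * of_real K ^ n) = norm (a n) * K ^ n" for n
    by (simp add: norm_mult norm_power)
  with assms(1) have "summable (\<lambda>n. norm (a n * of_real K ^ n))"
    by simp
  then have "summable (\<lambda>n. a n * of_real K ^ n)"
    by (rule summable_norm_cancel)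
  then have "((\<lambda>z. \<Sum>n. a n * z ^ n) has_field_derivative (\<Sum>n. diffs a n * z ^ n)) (at z)"
    by (rule termdiffs_strong) (use assms(2) \<open>K > 0\<close> in simp)
  then have "(\<lambda>z. \<Sum>n. a n * z ^ n) field_differentiable (at z)"
    unfolding field_differentiable_def by blast
  then show ?thesis
    by (rule field_differentiable_imp_differentiable)
qed

lemma differentiable_compose_exp_of_real:
  fixes g :: "complex \<Rightarrow> complex"
  assumes "g differentiable (at (exp (s * of_real k)))"
  shows "(\<lambda>k. g (exp (s * of_real k))) differentiable (at k)"
proof -
  have "(\<lambda>k. s * of_real k) differentiable (at k)"
    by (intro differentiable_mult differentiable_const bounded_linear_imp_differentiable
        bounded_linear_of_real)
  then have "(exp \<circ> (\<lambda>k. s * of_real k)) differentiable (at k)"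
    by (rule differentiable_chain_at)
      (intro field_differentiable_imp_differentiable field_differentiable_within_exp)
  then have "(g \<circ> (exp \<circ> (\<lambda>k. s * of_real k))) differentiable (at k)"
    by (rule differentiable_chain_at) (simp add: assms)
  then show ?thesis
    by (simp add: o_def)
qed

lemma summable_int_exp_decay_weighted:
  fixes c :: "int \<Rightarrow> 'a::real_normed_vector"
  assumes "L > 0"
    and decay: "\<And>l. \<bar>l\<bar> \<ge> N \<Longrightarrow> norm (c l) \<le> C * exp (- real_of_int \<bar>l\<bar> / L)"
  shows "summable (\<lambda>n. norm (c (int n)) * exp (1 / (2 * L)) ^ n)"
    and "summable (\<lambda>n. norm (c (- int n - 1)) * exp (1 / (2 * L)) ^ n)"
proof -
  have "norm (c \<bar>N\<bar>) \<le> C * exp (- real_of_int \<bar>\<bar>N\<bar>\<bar> / L)"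
    by (rule decay) simp
  then have "0 \<le> C * exp (- real_of_int \<bar>\<bar>N\<bar>\<bar> / L)"
    by (rule order_trans[OF norm_ge_zero])
  then have "C \<ge> 0"
    by (simp add: zero_le_mult_iff)
  have decay_nat: "norm (c (int n)) \<le> C * exp (- real n / L)" if "n \<ge> nat N" for n
    using decay[of "int n"] that by simp
  have decay_neg: "norm (c (- int n - 1)) \<le> C * exp (- real n / L)" if "n \<ge> nat N" for n
  proof -
    have "norm (c (- int n - 1)) \<le> C * exp (- (real n + 1) / L)"
      using decay[of "- int n - 1"] that by (simp add: algebra_simps)
    also have "\<dots> \<le> C * exp (- real n / L)"
      using \<open>C \<ge> 0\<close> assms(1) by (intro mult_left_mono) (simp_all add: field_simps)
    finally show ?thesis .
  qed
  show "summable (\<lambda>n. norm (c (int n)) * exp (1 / (2 * L)) ^ n)"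
    using assms(1) decay_nat by (rule summable_exp_decay_weighted)
  show "summable (\<lambda>n. norm (c (- int n - 1)) * exp (1 / (2 * L)) ^ n)"
    using assms(1) decay_neg by (rule summable_exp_decay_weighted)
qed

(* The series splits into power series in exp(-ik) and exp(ik) whose radius of
   convergence exceeds 1 because of the exponential decay. *)
lemma fourier_series_differentiable:
  fixes c :: "int \<Rightarrow> complex"
  assumes "L > 0"
    and decay: "\<And>l. \<bar>l\<bar> \<ge> N \<Longrightarrow> norm (c l) \<le> C * exp (- real_of_int \<bar>l\<bar> / L)"
  shows "(\<lambda>k. \<Sum>\<^sub>\<infinity>l. c l * exp (- \<i> * of_real (k * of_int l))) differentiable (at k)"
proof -
  define K where "K = exp (1 / (2 * L))"
  have "K > 1"
    using assms(1) by (simp add: K_def)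
  have weighted: "summable (\<lambda>n. norm (c (int n)) * K ^ n)"
    "summable (\<lambda>n. norm (c (- int n - 1)) * K ^ n)"
    using summable_int_exp_decay_weighted[OF assms(1) decay] by (simp_all add: K_def)
  have "norm (c l) \<le> norm (c l) * K ^ n" for l n
    using \<open>K > 1\<close> by (simp add: mult_le_cancel_left1)
  then have abs_summable: "summable (\<lambda>n. norm (c (int n)))" "summable (\<lambda>n. norm (c (- int n - 1)))"
    using weighted by (auto intro: summable_comparison_test')
  have split: "(\<lambda>k. \<Sum>\<^sub>\<infinity>l. c l * exp (- \<i> * of_real (k * of_int l)))
      = (\<lambda>k. (\<Sum>n. c (int n) * exp (- \<i> * of_real k) ^ n)
          + exp (\<i> * of_real k) * (\<Sum>n. c (- int n - 1) * exp (\<i> * of_real k) ^ n))"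
    using fourier_series_split[OF abs_summable] by blast
  show ?thesis
    unfolding split using \<open>K > 1\<close>
    by (intro differentiable_add differentiable_mult
        differentiable_compose_exp_of_real[where g = "\<lambda>z. z", OF differentiable_ident]
        differentiable_compose_exp_of_real powser_differentiable) (simp_all add: weighted)
qed

lemma transl_inv_shift:
  assumes "transl_inv D T" "a \<in> {1..D}" "b \<in> {1..D}"
  shows "T (i + n) a (j + n) b = T i a j b"
proof (induction n rule: int_induct[where k = 0])
  case base
  then show ?case by simp
next
  case (step1 n)
  then show ?case
    using assms unfolding transl_inv_def by (metis add.assoc)
next
  case (step2 n)
  have "T (i + (n - 1) + 1) a (j + (n - 1) + 1) b = T (i + (n - 1)) a (j + (n - 1)) b"
    using assms unfolding transl_inv_def by blast
  then show ?case using step2 by simp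
qed

lemma bloch_detailed_balance:
  assumes "transl_inv D T" "a \<in> {1..D}" "b \<in> {1..D}"
    and balance: "\<forall>i j a b. a \<in> {1..D} \<and> b \<in> {1..D} \<longrightarrow> T i a j b * p b = T j b i a * p a"
  shows "bloch T k a b * of_real (p b) = of_real (p a) * bloch T (-k) b a"
proof -
  define e where "e l = exp (- \<i> * complex_of_real (k * real_of_int l))" for l :: int
  have entry: "of_real (T l a 0 b) * e l * of_real (p b) = of_real (p a) * (of_real (T (-l) b 0 a) * e l)"
    for l
  proof -
    have "T l a 0 b * p b = T 0 b l a * p a"
      using balance assms(2,3) by blast
    also have "T 0 b l a = T (-l) b 0 a"
      using transl_inv_shift[OF assms(1,3,2), of "-l" l 0] by simp
    finally have "complex_of_real (T l a 0 b * p b) = of_real (T (-l) b 0 a * p a)"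
      by simp
    then show ?thesis by (simp add: algebra_simps)
  qed
  have "bloch T k a b * of_real (p b) = (\<Sum>\<^sub>\<infinity>l. of_real (T l a 0 b) * e l * of_real (p b))"
    unfolding bloch_def e_def by (simp add: infsum_cmult_left')
  also have "\<dots> = of_real (p a) * (\<Sum>\<^sub>\<infinity>l. of_real (T (-l) b 0 a) * e l)"
    by (simp add: entry infsum_cmult_right')
  also have "(\<Sum>\<^sub>\<infinity>l. of_real (T (-l) b 0 a) * e l) = bloch T (-k) b a"
    using infsum_reindex[of uminus UNIV "\<lambda>l. of_real (T l b 0 a) * e (-l)"]
    unfolding bloch_def e_def by (simp add: o_def)
  finally show ?thesis .
qed

lemma bloch_det_even:
  assumes "transl_inv D T" and pos: "\<forall>a\<in>{1..D}. p a > 0"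
    and balance: "\<forall>i j a b. a \<in> {1..D} \<and> b \<in> {1..D} \<longrightarrow> T i a j b * p b = T j b i a * p a"
  shows "bloch_det D T (-k) = bloch_det D T k"
proof -
  have "bloch T k a b = of_real (p a) * bloch T (-k) b a / of_real (p b)"
    if "a \<in> {1..D}" "b \<in> {1..D}" for a b
  proof -
    have "p b \<noteq> 0" using pos that(2) by force
    then show ?thesis
      using bloch_detailed_balance[OF assms(1) that balance, of k] by (simp add: field_simps)
  qed
  then have "bloch_det D T k = detD D (\<lambda>a b. of_real (p a) * bloch T (-k) b a / of_real (p b))"
    unfolding bloch_det_def by (rule detD_cong)
  also have "\<dots> = detD D (\<lambda>a b. bloch T (-k) b a)"
    using pos by (intro detD_diagonal_similarity) auto
  also have "\<dots> = bloch_det D T (-k)"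
    unfolding bloch_det_def by (rule detD_transpose)
  finally show ?thesis by simp
qed

lemma bloch_entry_differentiable:
  assumes "stochastic D T" "local_mat D T" "a \<in> {1..D}" "b \<in> {1..D}"
  shows "(\<lambda>k. bloch T k a b) differentiable (at k)"
proof -
  obtain C L N where "L > 0"
    and decay: "\<And>l. \<bar>l\<bar> \<ge> N \<Longrightarrow> T l a 0 b \<le> C * exp (- real_of_int \<bar>l\<bar> / L)"
    using assms(2-4) unfolding local_mat_def by (metis diff_zero)
  have "T l a 0 b \<ge> 0" for l
    using assms(1,3,4) unfolding stochastic_def by blast
  then have "norm (complex_of_real (T l a 0 b)) \<le> C * exp (- real_of_int \<bar>l\<bar> / L)"
    if "\<bar>l\<bar> \<ge> N" for l
    using decay[OF that] by simp
  then show ?thesis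
    unfolding bloch_def by (rule fourier_series_differentiable[OF \<open>L > 0\<close>])
qed

(* Stationarity of p is implied by detailed balance, and the nonvanishing of det X(k) only
   makes the winding number meaningful. *)
theorem mainTheorem9:
  fixes D :: nat and T :: smat and p :: "nat \<Rightarrow> real"
  assumes "D \<ge> 1"
    and "stochastic D T" and "local_mat D T" and "transl_inv D T"
    and "\<forall>k\<in>{-pi..pi}. bloch_det D T k \<noteq> 0"
    and "\<forall>a\<in>{1..D}. p a > 0"
    and "\<forall>i a. a \<in> {1..D} \<longrightarrow>
           ((\<lambda>(j, b). T i a j b * p b) has_sum p a) (UNIV \<times> {1..D})"
    and "\<forall>i j a b. a \<in> {1..D} \<and> b \<in> {1..D} \<longrightarrow> T i a j b * p b = T j b i a * p a"
  shows "winding_w D T = 0"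
proof -
  let ?f = "bloch_det D T"
  have "?f differentiable (at k)" for k
    using detD_differentiable[of D "\<lambda>k. bloch T k" k] bloch_entry_differentiable[OF assms(2,3)]
    by (simp add: bloch_det_def[abs_def])
  moreover have even: "?f (- k) = ?f k" for k
    by (rule bloch_det_even[OF assms(4,6,8)])
  ultimately have "vector_derivative ?f (at (- k)) = - vector_derivative ?f (at k)" for k
    by (rule vector_derivative_even_function)
  then have "integral {-pi..pi} (\<lambda>k. vector_derivative ?f (at k) / ?f k) = 0"
    by (intro integral_odd_function) (simp add: even)
  then show ?thesis
    unfolding winding_w_def by simp
qed

end
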